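(* Let $k$ be a field of characteristic zero, let $S$ be the first Weyl algebra over $k$, generated by $x,y$ subject to $yx-xy=1$, let $R=k[x]\subseteq S$, and let $f$ be the inclusion. Then the correspondence $\mathbf r\colon\operatorname{Spec} S\to\operatorname{Spec} R$ is a single-valued continuous function, but $\lambda$ is not a left adjoint to $\rho$.
   Context: $\operatorname{Spec}$ carries the Zariski topology, closed sets $V_A(X)=\{P\in\operatorname{Spec} A:P\supseteq X\}$; for $U\subseteq\operatorname{Spec} A$, $I(U)$ is the intersection of the primes in $U$. For $P\in\operatorname{Spec} S$, $\mathbf rP$ is the set of primes of $R$ minimal over $P\cap R$; $\mathbf r$ is continuous if $\{P:\mathbf rP\subseteq V\}$ is closed for every closed $V\subseteq\operatorname{Spec} R$. For an ideal $I$ of $R$, $I^S=\operatorname{ann}_S(S/SI)$. The functor $\lambda$ sends a closed $V\subseteq\operatorname{Spec} S$ to $V_R(I(V)\cap R)$; the functor $\rho$ sends a closed $V\subseteq\operatorname{Spec} R$ to $V_S(I(V)^S)$. "$\lambda$ is a left adjoint to $\rho$" means $\lambda U\subseteq V\iff U\subseteq\rho V$ for all closed $U\subseteq\operatorname{Spec} S$, $V\subseteq\operatorname{Spec} R$. *)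

theory Defs
  imports "HOL-Algebra.Ideal" "HOL-Computational_Algebra.Polynomial"
begin

text \<open>Since P is closed under addition, IJ \<subseteq> P iff all products i*j lie in P.\<close>

definition prime_ideal_nc :: "('a, 'b) ring_scheme \<Rightarrow> 'a set \<Rightarrow> bool" where
  "prime_ideal_nc A P \<longleftrightarrow> ideal P A \<and> P \<noteq> carrier A \<and>
     (\<forall>I J. ideal I A \<longrightarrow> ideal J A \<longrightarrow> (\<forall>i\<in>I. \<forall>j\<in>J. i \<otimes>\<^bsub>A\<^esub> j \<in> P)
        \<longrightarrow> I \<subseteq> P \<or> J \<subseteq> P)"

definition Spec :: "('a, 'b) ring_scheme \<Rightarrow> 'a set set" where
  "Spec A = {P. prime_ideal_nc A P}"

definition Vz :: "('a, 'b) ring_scheme \<Rightarrow> 'a set \<Rightarrow> 'a set set" where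
  "Vz A X = {P \<in> Spec A. X \<subseteq> P}"

definition zariski_closed :: "('a, 'b) ring_scheme \<Rightarrow> 'a set set \<Rightarrow> bool" where
  "zariski_closed A V \<longleftrightarrow> (\<exists>X \<subseteq> carrier A. V = Vz A X)"

text \<open>I(U): intersection of the primes in U (the whole ring if U is empty).\<close>
definition Iz :: "('a, 'b) ring_scheme \<Rightarrow> 'a set set \<Rightarrow> 'a set" where
  "Iz A U = carrier A \<inter> \<Inter> U"

text \<open>R is given by its carrier Rc \<subseteq> carrier S; as a ring it is S restricted to Rc,
  and f is the inclusion.\<close>

definition subring_ring :: "('a, 'b) ring_scheme \<Rightarrow> 'a set \<Rightarrow> ('a, 'b) ring_scheme" where
  "subring_ring S Rc = S\<lparr>carrier := Rc\<rparr>"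

definition rcorr :: "('a, 'b) ring_scheme \<Rightarrow> 'a set \<Rightarrow> 'a set \<Rightarrow> 'a set set" where
  "rcorr S Rc P = {Q \<in> Spec (subring_ring S Rc). P \<inter> Rc \<subseteq> Q \<and>
      (\<forall>Q' \<in> Spec (subring_ring S Rc). P \<inter> Rc \<subseteq> Q' \<and> Q' \<subseteq> Q \<longrightarrow> Q' = Q)}"

definition rcorr_single_valued :: "('a, 'b) ring_scheme \<Rightarrow> 'a set \<Rightarrow> bool" where
  "rcorr_single_valued S Rc \<longleftrightarrow> (\<forall>P \<in> Spec S. \<exists>Q. rcorr S Rc P = {Q})"

definition rcorr_continuous :: "('a, 'b) ring_scheme \<Rightarrow> 'a set \<Rightarrow> bool" where
  "rcorr_continuous S Rc \<longleftrightarrow>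
     (\<forall>V. zariski_closed (subring_ring S Rc) V \<longrightarrow>
          zariski_closed S {P \<in> Spec S. rcorr S Rc P \<subseteq> V})"

definition left_ext :: "('a, 'b) ring_scheme \<Rightarrow> 'a set \<Rightarrow> 'a set" where
  "left_ext S I = {finsum S (\<lambda>i::nat. s i \<otimes>\<^bsub>S\<^esub> a i) {..<n} | (n::nat) (s::nat \<Rightarrow> 'a) (a::nat \<Rightarrow> 'a).
       (\<forall>i<n. s i \<in> carrier S) \<and> (\<forall>i<n. a i \<in> I)}"

text \<open>I^S = ann_S(S/SI) = {s \<in> S. s t \<in> SI for all t \<in> S}.\<close>
definition ext_ann :: "('a, 'b) ring_scheme \<Rightarrow> 'a set \<Rightarrow> 'a set" where
  "ext_ann S I = {s \<in> carrier S. \<forall>t \<in> carrier S. s \<otimes>\<^bsub>S\<^esub> t \<in> left_ext S I}"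

definition lambda_fun :: "('a, 'b) ring_scheme \<Rightarrow> 'a set \<Rightarrow> 'a set set \<Rightarrow> 'a set set" where
  "lambda_fun S Rc U = Vz (subring_ring S Rc) (Iz S U \<inter> Rc)"

definition rho_fun :: "('a, 'b) ring_scheme \<Rightarrow> 'a set \<Rightarrow> 'a set set \<Rightarrow> 'a set set" where
  "rho_fun S Rc V = Vz S (ext_ann S (Iz (subring_ring S Rc) V))"

definition lambda_left_adjoint_rho :: "('a, 'b) ring_scheme \<Rightarrow> 'a set \<Rightarrow> bool" where
  "lambda_left_adjoint_rho S Rc \<longleftrightarrow>
     (\<forall>U V. zariski_closed S U \<longrightarrow> zariski_closed (subring_ring S Rc) V \<longrightarrow>
        (lambda_fun S Rc U \<subseteq> V \<longleftrightarrow> U \<subseteq> rho_fun S Rc V))"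

text \<open>Realised (faithfully, since char k = 0) as the ring of differential operators on k[x]:
  operators p \<mapsto> \<Sum>_{j<n} c_j(x) * (d/dx)^j p, with composition as multiplication.
  Here x acts by multiplication by x and y = d/dx, so that yx - xy = 1.\<close>

definition weyl_carrier :: "('a::field_char_0 poly \<Rightarrow> 'a poly) set" where
  "weyl_carrier = {D. \<exists>n (c :: nat \<Rightarrow> 'a poly). D = (\<lambda>p. \<Sum>j<n. c j * (pderiv ^^ j) p)}"

definition weyl_algebra :: "('a::field_char_0 poly \<Rightarrow> 'a poly) ring" where
  "weyl_algebra = \<lparr>carrier = weyl_carrier, monoid.mult = (\<circ>), one = id,
     zero = (\<lambda>p. 0), add = (\<lambda>D E p. D p + E p)\<rparr>"

definition weyl_kx :: "('a::field_char_0 poly \<Rightarrow> 'a poly) set" where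
  "weyl_kx = {D. \<exists>c :: 'a poly. D = (\<lambda>p. c * p)}"

end

theory Submission
  imports Defs "HOL-Algebra.Subrings"
begin

text \<open>
  Realised as differential operators on \<open>k[x]\<close>, the Weyl algebra \<open>S\<close> is simple: \<open>ad_x\<close>
  lowers the order of an operator, so a nonzero ideal contains a nonzero operator commuting
  with \<open>x\<close>, i.e. multiplication by some \<open>c \<noteq> 0\<close>; commutators with \<open>d/dx\<close> differentiate \<open>c\<close>
  down to a nonzero constant. Hence \<open>Spec S = {0}\<close>, and \<open>0 \<inter> R = 0\<close> is prime in the domain
  \<open>R = k[x]\<close>, so \<open>r\<close> is single-valued, and continuous because \<open>Spec S\<close> is a point.
  For \<open>U = Spec S\<close> and \<open>V = V(xR)\<close> the set \<open>\<lambda>U = Spec R\<close> is not contained in \<open>V\<close>.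
  But \<open>I(V) \<subseteq> xR \<subseteq> Sx\<close>, a proper left ideal since \<open>x\<close> has no left inverse, and \<open>I(V)\<^sup>S\<close>
  is a two-sided ideal inside it, hence \<open>0\<close>; so \<open>\<rho>V = Spec S \<supseteq> U\<close>.
\<close>

section \<open>Left ideals and simple rings\<close>

definition left_ideal :: "'a set \<Rightarrow> ('a, 'b) ring_scheme \<Rightarrow> bool" where
  "left_ideal L A \<longleftrightarrow> additive_subgroup L A \<and> (\<forall>a\<in>carrier A. \<forall>l\<in>L. a \<otimes>\<^bsub>A\<^esub> l \<in> L)"

lemma (in ring) left_ideal_cgenideal:
  assumes a: "a \<in> carrier R"
  shows "left_ideal (PIdl a) R"
  unfolding left_ideal_def cgenideal_def
proof (intro conjI ballI additive_subgroupI add.subgroupI)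
  show "{x \<otimes> a |x. x \<in> carrier R} \<subseteq> carrier R" "{x \<otimes> a |x. x \<in> carrier R} \<noteq> {}"
    using a by blast+
next
  fix u v assume "u \<in> {x \<otimes> a |x. x \<in> carrier R}" "v \<in> {x \<otimes> a |x. x \<in> carrier R}"
  then obtain x y where xy: "x \<in> carrier R" "y \<in> carrier R" "u = x \<otimes> a" "v = y \<otimes> a" by blast
  show "\<ominus> u \<in> {x \<otimes> a |x. x \<in> carrier R}"
    using xy a by (metis (mono_tags, lifting) add.inv_closed l_minus mem_Collect_eq)
  show "u \<oplus> v \<in> {x \<otimes> a |x. x \<in> carrier R}"
    using xy a by (metis (mono_tags, lifting) add.m_closed l_distr mem_Collect_eq)
next
  fix b u assume "b \<in> carrier R" "u \<in> {x \<otimes> a |x. x \<in> carrier R}"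
  then obtain x where x: "x \<in> carrier R" "u = x \<otimes> a" by blast
  then have "b \<otimes> u = (b \<otimes> x) \<otimes> a" using a \<open>b \<in> carrier R\<close> by (simp add: m_assoc)
  then show "b \<otimes> u \<in> {x \<otimes> a |x. x \<in> carrier R}" using x \<open>b \<in> carrier R\<close> by blast
qed

lemma (in ring) left_ext_minimal:
  assumes L: "left_ideal L R" and I: "I \<subseteq> L"
  shows "left_ext R I \<subseteq> L"
proof
  interpret L: additive_subgroup L R using L unfolding left_ideal_def by blast
  have sum_in_L: "(\<And>i. i < n \<Longrightarrow> s i \<in> carrier R) \<Longrightarrow> (\<And>i. i < n \<Longrightarrow> a i \<in> I) \<Longrightarrow>
      finsum R (\<lambda>i. s i \<otimes> a i) {..<n} \<in> L" for n :: nat and s a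
  proof (induction n)
    case 0 then show ?case by simp
  next
    case (Suc n)
    have terms: "s i \<otimes> a i \<in> L" if "i < Suc n" for i
      using L Suc.prems that I unfolding left_ideal_def by blast
    then have "(\<lambda>i. s i \<otimes> a i) \<in> {..<n} \<rightarrow> carrier R" "s n \<otimes> a n \<in> carrier R"
      using L.a_subset by auto
    then have "finsum R (\<lambda>i. s i \<otimes> a i) {..<Suc n} = s n \<otimes> a n \<oplus> finsum R (\<lambda>i. s i \<otimes> a i) {..<n}"
      by (simp add: lessThan_Suc finsum_insert)
    then show ?case using Suc terms by simp
  qed
  fix x assume "x \<in> left_ext R I"
  then show "x \<in> L" unfolding left_ext_def using sum_in_L by blast
qed

text \<open>For a left ideal \<open>L\<close>, the largest two-sided ideal contained in \<open>L\<close>.\<close>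

definition ideal_core :: "('a, 'b) ring_scheme \<Rightarrow> 'a set \<Rightarrow> 'a set" where
  "ideal_core A L = {s \<in> carrier A. \<forall>t\<in>carrier A. s \<otimes>\<^bsub>A\<^esub> t \<in> L}"

lemma ext_ann_eq_ideal_core: "ext_ann A I = ideal_core A (left_ext A I)"
  unfolding ext_ann_def ideal_core_def ..

lemma ideal_core_mono: "L \<subseteq> L' \<Longrightarrow> ideal_core A L \<subseteq> ideal_core A L'"
  unfolding ideal_core_def by blast

lemma (in ring) ideal_core_subset: "ideal_core R L \<subseteq> L"
proof
  fix s assume "s \<in> ideal_core R L"
  then have "s \<in> carrier R" "s \<otimes> \<one> \<in> L" unfolding ideal_core_def using one_closed by blast+
  then show "s \<in> L" by simp
qed

lemma (in ring) ideal_ideal_core: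
  assumes "left_ideal L R"
  shows "ideal (ideal_core R L) R"
proof -
  interpret L: additive_subgroup L R using assms unfolding left_ideal_def by blast
  have L_lmult: "a \<otimes> l \<in> L" if "a \<in> carrier R" "l \<in> L" for a l
    using assms that unfolding left_ideal_def by blast
  show ?thesis
  proof (rule idealI[OF ring_axioms], rule add.subgroupI)
    show "ideal_core R L \<subseteq> carrier R" unfolding ideal_core_def by blast
    show "ideal_core R L \<noteq> {}" unfolding ideal_core_def by auto
  next
    fix s s' assume "s \<in> ideal_core R L" "s' \<in> ideal_core R L"
    then show "\<ominus> s \<in> ideal_core R L" "s \<oplus> s' \<in> ideal_core R L"
      unfolding ideal_core_def by (auto simp: l_minus l_distr)
  next
    fix s u assume "s \<in> ideal_core R L" "u \<in> carrier R"
    then show "u \<otimes> s \<in> ideal_core R L" "s \<otimes> u \<in> ideal_core R L"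
      unfolding ideal_core_def by (auto simp: m_assoc L_lmult)
  qed
qed

lemma (in ring) ideal_commutator_closed:
  assumes "ideal I R" "a \<in> I" "u \<in> carrier R"
  shows "u \<otimes> a \<ominus> a \<otimes> u \<in> I"
proof -
  interpret I: ideal I R by fact
  show ?thesis
    unfolding a_minus_def using assms I.I_l_closed I.I_r_closed by blast
qed

definition simple_ring :: "('a, 'b) ring_scheme \<Rightarrow> bool" where
  "simple_ring A \<longleftrightarrow> ring A \<and> \<one>\<^bsub>A\<^esub> \<noteq> \<zero>\<^bsub>A\<^esub> \<and>
     (\<forall>I. ideal I A \<longrightarrow> I = {\<zero>\<^bsub>A\<^esub>} \<or> I = carrier A)"

lemma simple_ringD:
  assumes "simple_ring A" "ideal I A" "a \<in> I" "a \<noteq> \<zero>\<^bsub>A\<^esub>"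
  shows "I = carrier A"
  using assms unfolding simple_ring_def by blast

lemma ideal_core_eq_zero:
  assumes simple: "simple_ring A" and L: "left_ideal L A" "\<one>\<^bsub>A\<^esub> \<notin> L"
  shows "ideal_core A L = {\<zero>\<^bsub>A\<^esub>}"
proof -
  interpret ring A using simple unfolding simple_ring_def by blast
  have "ideal_core A L \<noteq> carrier A" using L ideal_core_subset by blast
  then show ?thesis using simple ideal_ideal_core[OF L(1)] unfolding simple_ring_def by blast
qed

section \<open>Prime spectra and the correspondences \<open>r\<close>, \<open>\<lambda>\<close>, \<open>\<rho>\<close>\<close>

lemma Spec_ideal: "P \<in> Spec A \<Longrightarrow> ideal P A"
  unfolding Spec_def prime_ideal_nc_def by blast

lemma Spec_subset_carrier: "P \<in> Spec A \<Longrightarrow> P \<subseteq> carrier A"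
  by (meson Spec_ideal additive_subgroup.a_subset ideal.axioms(1))

lemma zero_in_Spec: "P \<in> Spec A \<Longrightarrow> \<zero>\<^bsub>A\<^esub> \<in> P"
  by (meson Spec_ideal additive_subgroup.zero_closed ideal.axioms(1))

lemma Spec_ne_carrier: "P \<in> Spec A \<Longrightarrow> P \<noteq> carrier A"
  unfolding Spec_def prime_ideal_nc_def by blast

lemma (in cring) primeideal_imp_prime_ideal_nc:
  assumes "primeideal P R"
  shows "prime_ideal_nc R P"
  unfolding prime_ideal_nc_def
proof (intro conjI allI impI)
  interpret P: primeideal P R by fact
  show "ideal P R" "P \<noteq> carrier R" using P.is_ideal P.I_notcarr by auto
  fix I J assume I: "ideal I R" and J: "ideal J R" and IJ: "\<forall>i\<in>I. \<forall>j\<in>J. i \<otimes> j \<in> P"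
  show "I \<subseteq> P \<or> J \<subseteq> P"
  proof (rule disjCI)
    assume "\<not> J \<subseteq> P"
    then obtain j where j: "j \<in> J" "j \<notin> P" by blast
    show "I \<subseteq> P"
    proof
      fix i assume i: "i \<in> I"
      have "i \<in> carrier R" "j \<in> carrier R"
        using i j additive_subgroup.a_subset[OF ideal.axioms(1)[OF I]]
          additive_subgroup.a_subset[OF ideal.axioms(1)[OF J]] by blast+
      then show "i \<in> P" using P.I_prime IJ i j by blast
    qed
  qed
qed

lemma Spec_simple_ring:
  fixes A (structure)
  assumes simple: "simple_ring A"
  shows "Spec A = {{\<zero>}}"
proof -
  interpret ring A using simple unfolding simple_ring_def by blast
  have one_ne_zero: "\<one> \<noteq> \<zero>" using simple unfolding simple_ring_def by blast
  have zero_prime: "{\<zero>} \<in> Spec A"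
    unfolding Spec_def prime_ideal_nc_def
  proof (intro CollectI conjI allI impI zeroideal)
    show "{\<zero>} \<noteq> carrier A" using one_ne_zero one_closed by blast
  next
    fix I J assume I: "ideal I A" and J: "ideal J A" and IJ: "\<forall>i\<in>I. \<forall>j\<in>J. i \<otimes> j \<in> {\<zero>}"
    show "I \<subseteq> {\<zero>} \<or> J \<subseteq> {\<zero>}"
    proof (rule disjCI)
      assume "\<not> J \<subseteq> {\<zero>}"
      then have "\<one> \<in> J" using simple_ringD[OF simple J] by blast
      show "I \<subseteq> {\<zero>}"
      proof
        fix i assume i: "i \<in> I"
        then have "i \<otimes> \<one> \<in> {\<zero>}" using IJ \<open>\<one> \<in> J\<close> by blast
        then show "i \<in> {\<zero>}"
          using i additive_subgroup.a_subset[OF ideal.axioms(1)[OF I]] by auto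
      qed
    qed
  qed
  have "P = {\<zero>}" if "P \<in> Spec A" for P
  proof -
    have "P \<subseteq> {\<zero>}"
      using simple_ringD[OF simple Spec_ideal[OF that]] Spec_ne_carrier[OF that] by blast
    then show ?thesis using zero_in_Spec[OF that] by blast
  qed
  then show ?thesis using zero_prime by blast
qed

lemma Vz_empty: "Vz A {} = Spec A"
  by (simp add: Vz_def)

lemma Vz_carrier: "Vz A (carrier A) = {}"
  unfolding Vz_def using Spec_subset_carrier Spec_ne_carrier by fastforce

lemma zariski_closed_subset_singleton_Spec:
  assumes "Spec A = {P}" "U \<subseteq> Spec A"
  shows "zariski_closed A U"
proof -
  have "U = Vz A {} \<or> U = Vz A (carrier A)"
    using assms unfolding Vz_empty Vz_carrier by (metis subset_singletonD)
  then show ?thesis unfolding zariski_closed_def by blast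
qed

lemma rcorr_eq_contraction:
  assumes prime: "P \<inter> Rc \<in> Spec (subring_ring S Rc)"
  shows "rcorr S Rc P = {P \<inter> Rc}"
proof (intro equalityI subsetI)
  fix Q assume "Q \<in> rcorr S Rc P"
  then have "P \<inter> Rc \<subseteq> Q" "P \<inter> Rc \<subseteq> Q \<Longrightarrow> P \<inter> Rc = Q"
    using prime unfolding rcorr_def by auto
  then show "Q \<in> {P \<inter> Rc}" by simp
next
  fix Q assume "Q \<in> {P \<inter> Rc}"
  then show "Q \<in> rcorr S Rc P" using prime unfolding rcorr_def by auto
qed

lemma rcorr_single_valuedI:
  assumes "\<And>P. P \<in> Spec S \<Longrightarrow> P \<inter> Rc \<in> Spec (subring_ring S Rc)"
  shows "rcorr_single_valued S Rc"
  unfolding rcorr_single_valued_def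
  using rcorr_eq_contraction[OF assms] by (intro ballI exI)

lemma rcorr_continuous_if_Spec_singleton:
  assumes "Spec S = {P}"
  shows "rcorr_continuous S Rc"
  unfolding rcorr_continuous_def
  by (intro allI impI zariski_closed_subset_singleton_Spec[OF assms]) auto

lemma not_lambda_left_adjoint_rho:
  fixes S (structure)
  assumes simple: "simple_ring S" and L: "left_ideal L S" "\<one> \<notin> L"
    and Q: "Q \<in> Spec (subring_ring S Rc)" "Q \<subseteq> L"
    and Q': "Q' \<in> Spec (subring_ring S Rc)" "\<not> Q \<subseteq> Q'"
  shows "\<not> lambda_left_adjoint_rho S Rc"
proof
  assume adjoint: "lambda_left_adjoint_rho S Rc"
  interpret ring S using simple unfolding simple_ring_def by blast
  let ?R = "subring_ring S Rc"
  have Spec_S: "Spec S = {{\<zero>}}" by (rule Spec_simple_ring[OF simple])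
  define U where "U = Spec S"
  define V where "V = Vz ?R Q"
  have U_closed: "zariski_closed S U"
    unfolding zariski_closed_def U_def by (metis Vz_empty empty_subsetI)
  have V_closed: "zariski_closed ?R V"
    unfolding zariski_closed_def V_def using Spec_subset_carrier[OF Q(1)] by blast
  have "Q \<in> V" unfolding V_def Vz_def using Q(1) by simp
  then have "Iz ?R V \<subseteq> L"
    using Q(2) unfolding Iz_def by blast
  then have "ext_ann S (Iz ?R V) \<subseteq> ideal_core S L"
    unfolding ext_ann_eq_ideal_core by (intro ideal_core_mono left_ext_minimal[OF L(1)])
  then have "ext_ann S (Iz ?R V) \<subseteq> {\<zero>}"
    unfolding ideal_core_eq_zero[OF simple L] .
  then have "U \<subseteq> rho_fun S Rc V"
    unfolding U_def rho_fun_def Vz_def Spec_S by simp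
  moreover have "Q' \<in> lambda_fun S Rc U"
  proof -
    have "Iz S U \<inter> Rc \<subseteq> {\<zero>\<^bsub>?R\<^esub>}"
      unfolding Iz_def U_def Spec_S by (auto simp: subring_ring_def)
    then show ?thesis
      unfolding lambda_fun_def Vz_def using Q'(1) zero_in_Spec[OF Q'(1)] by blast
  qed
  moreover have "Q' \<notin> V" unfolding V_def Vz_def using Q'(2) by simp
  ultimately show False
    using adjoint U_closed V_closed unfolding lambda_left_adjoint_rho_def by blast
qed

section \<open>The Weyl algebra as a ring of differential operators\<close>

lemma higher_pderiv_pCons_zero:
  "(pderiv ^^ j) (pCons 0 p) = pCons 0 ((pderiv ^^ j) p) + of_nat j * (pderiv ^^ (j - 1)) p"
proof (induction j)
  case (Suc j)
  have "(pderiv ^^ Suc j) (pCons 0 p) =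
      pCons 0 ((pderiv ^^ Suc j) p) + (pderiv ^^ j) p + of_nat j * pderiv ((pderiv ^^ (j - 1)) p)"
    by (simp add: Suc pderiv_add pderiv_mult pderiv_pCons add_ac)
  also have "\<dots> = pCons 0 ((pderiv ^^ Suc j) p) + of_nat (Suc j) * (pderiv ^^ (Suc j - 1)) p"
    by (cases j) (auto simp: algebra_simps)
  finally show ?case .
qed simp

lemma sum_pCons_zero: "(\<Sum>i\<in>A. pCons 0 (f i)) = pCons 0 (\<Sum>i\<in>A. f i)"
  by (induction A rule: infinite_finite_induct) simp_all

lemma higher_pderiv_degree:
  fixes p :: "'a::{comm_semiring_1,semiring_no_zero_divisors,semiring_char_0} poly"
  shows "(pderiv ^^ degree p) p = [:fact (degree p) * lead_coeff p:]"
proof -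
  have "degree ((pderiv ^^ degree p) p) = 0" by (simp add: degree_higher_pderiv)
  then have "(pderiv ^^ degree p) p = [:Polynomial.coeff ((pderiv ^^ degree p) p) 0:]"
    by (simp add: degree_0_id)
  then show ?thesis by (simp add: coeff_higher_pderiv pochhammer_fact)
qed

definition diff_op :: "nat \<Rightarrow> (nat \<Rightarrow> 'a::field_char_0 poly) \<Rightarrow> 'a poly \<Rightarrow> 'a poly" where
  "diff_op n c = (\<lambda>p. \<Sum>j<n. c j * (pderiv ^^ j) p)"

lemma weyl_carrier_iff: "D \<in> weyl_carrier \<longleftrightarrow> (\<exists>n c. D = diff_op n c)"
  unfolding weyl_carrier_def diff_op_def by auto

lemma diff_op_in_weyl_carrier [simp]: "diff_op n c \<in> weyl_carrier"
  unfolding weyl_carrier_iff by blast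

lemma weyl_op_add: "D \<in> weyl_carrier \<Longrightarrow> D (p + q) = D p + D q"
  by (auto simp: weyl_carrier_iff diff_op_def higher_pderiv_add distrib_left sum.distrib)

lemma weyl_op_smult: "D \<in> weyl_carrier \<Longrightarrow> D (Polynomial.smult a p) = Polynomial.smult a (D p)"
proof -
  assume "D \<in> weyl_carrier"
  then obtain n c where D: "D = diff_op n c" unfolding weyl_carrier_iff by blast
  have "[:a:] * D p = D ([:a:] * p)"
    unfolding D diff_op_def
    by (simp add: sum_distrib_left higher_pderiv_smult[of _ a, simplified] mult.left_commute)
  then show ?thesis by simp
qed

lemma weyl_op_zero: "D \<in> weyl_carrier \<Longrightarrow> D 0 = 0"
  by (auto simp: weyl_carrier_iff diff_op_def)

lemma weyl_op_sum: "D \<in> weyl_carrier \<Longrightarrow> D (\<Sum>i\<in>A. f i) = (\<Sum>i\<in>A. D (f i))"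
  by (induction A rule: infinite_finite_induct) (simp_all add: weyl_op_add weyl_op_zero)

lemma diff_op_pad: "n \<le> N \<Longrightarrow> diff_op n c = diff_op N (\<lambda>j. if j < n then c j else 0)"
proof -
  assume "n \<le> N"
  then have "{..<N} \<inter> {j. j < n} = {..<n}" by auto
  then show ?thesis
    unfolding diff_op_def by (auto intro!: ext simp: if_distrib[of "\<lambda>x. x * _"] sum.If_cases)
qed

lemma weyl_carrier_add: "D \<in> weyl_carrier \<Longrightarrow> E \<in> weyl_carrier \<Longrightarrow> (\<lambda>p. D p + E p) \<in> weyl_carrier"
proof -
  assume "D \<in> weyl_carrier" "E \<in> weyl_carrier"
  then obtain n c m d where "D = diff_op n c" "E = diff_op m d" unfolding weyl_carrier_iff by blast
  then have "D = diff_op (max n m) (\<lambda>j. if j < n then c j else 0)"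
    and "E = diff_op (max n m) (\<lambda>j. if j < m then d j else 0)"
    using diff_op_pad[of n "max n m" c] diff_op_pad[of m "max n m" d] by auto
  then have "(\<lambda>p. D p + E p) =
      diff_op (max n m) (\<lambda>j. (if j < n then c j else 0) + (if j < m then d j else 0))"
    unfolding diff_op_def by (simp add: distrib_right sum.distrib)
  then show ?thesis by simp
qed

lemma weyl_carrier_mult_left: "D \<in> weyl_carrier \<Longrightarrow> (\<lambda>p. a * D p) \<in> weyl_carrier"
proof -
  assume "D \<in> weyl_carrier"
  then obtain n c where "D = diff_op n c" unfolding weyl_carrier_iff by blast
  then have "(\<lambda>p. a * D p) = diff_op n (\<lambda>j. a * c j)"
    unfolding diff_op_def by (simp add: sum_distrib_left mult.assoc)
  then show ?thesis by simp
qed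

lemma mult_op_in_weyl_carrier [simp]: "(*) a \<in> weyl_carrier"
proof -
  have "(*) a = diff_op 1 (\<lambda>j. a)" unfolding diff_op_def by auto
  then show ?thesis by simp
qed

lemma pCons_zero_in_weyl_carrier: "pCons 0 \<in> weyl_carrier"
proof -
  have "pCons 0 = (*) [:0, 1 :: 'a:]" by auto
  then show ?thesis by (metis mult_op_in_weyl_carrier)
qed

lemma weyl_carrier_uminus: "D \<in> weyl_carrier \<Longrightarrow> (\<lambda>p. - D p) \<in> weyl_carrier"
  using weyl_carrier_mult_left[of D "-1"] by simp

lemma weyl_carrier_zero: "(\<lambda>p. 0) \<in> weyl_carrier"
proof -
  have "(\<lambda>p. 0) = (*) (0 :: 'a poly)" by auto
  then show ?thesis by (metis mult_op_in_weyl_carrier)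
qed

lemma id_in_weyl_carrier: "id \<in> weyl_carrier"
proof -
  have "id = (*) (1 :: 'a poly)" by auto
  then show ?thesis by (metis mult_op_in_weyl_carrier)
qed

lemma weyl_carrier_sum:
  "finite A \<Longrightarrow> (\<And>i. i \<in> A \<Longrightarrow> F i \<in> weyl_carrier) \<Longrightarrow> (\<lambda>p. \<Sum>i\<in>A. F i p) \<in> weyl_carrier"
  by (induction A rule: finite_induct) (simp_all add: weyl_carrier_zero weyl_carrier_add)

lemma weyl_carrier_comp_pderiv: "D \<in> weyl_carrier \<Longrightarrow> D \<circ> pderiv \<in> weyl_carrier"
proof -
  assume "D \<in> weyl_carrier"
  then obtain n c where D: "D = diff_op n c" unfolding weyl_carrier_iff by blast
  have "D \<circ> pderiv = diff_op (Suc n) (\<lambda>j. if j = 0 then 0 else c (j - 1))"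
    unfolding D diff_op_def
    by (rule ext, simp only: sum.lessThan_Suc_shift) (simp add: funpow_Suc_right del: funpow.simps)
  then show ?thesis by simp
qed

lemma pderiv_in_weyl_carrier: "pderiv \<in> weyl_carrier"
  using weyl_carrier_comp_pderiv[OF id_in_weyl_carrier] by simp

lemma weyl_carrier_comp_higher_pderiv: "D \<in> weyl_carrier \<Longrightarrow> D \<circ> (pderiv ^^ k) \<in> weyl_carrier"
proof (induction k arbitrary: D)
  case (Suc k)
  have "D \<circ> (pderiv ^^ Suc k) = (D \<circ> pderiv) \<circ> (pderiv ^^ k)"
    by (simp add: comp_assoc)
  then show ?case using Suc weyl_carrier_comp_pderiv by metis
qed simp

lemma higher_pderiv_mult_in_weyl_carrier: "(\<lambda>p. (pderiv ^^ j) (d * p)) \<in> weyl_carrier"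
proof (induction j arbitrary: d)
  case (Suc j)
  have "(\<lambda>p. (pderiv ^^ Suc j) (d * p)) =
      (\<lambda>p. ((\<lambda>p. (pderiv ^^ j) (d * p)) \<circ> pderiv) p + (pderiv ^^ j) (pderiv d * p))"
    by (auto intro!: ext simp: funpow_Suc_right pderiv_mult higher_pderiv_add mult.commute
        simp del: funpow.simps)
  then show ?case using Suc weyl_carrier_comp_pderiv weyl_carrier_add by metis
qed simp

lemma weyl_carrier_comp_mult: "D \<in> weyl_carrier \<Longrightarrow> (\<lambda>p. D (d * p)) \<in> weyl_carrier"
proof -
  assume "D \<in> weyl_carrier"
  then obtain n c where "D = diff_op n c" unfolding weyl_carrier_iff by blast
  then have "(\<lambda>p. D (d * p)) = (\<lambda>p. \<Sum>j<n. c j * (pderiv ^^ j) (d * p))"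
    unfolding diff_op_def by simp
  also have "\<dots> \<in> weyl_carrier"
    by (intro weyl_carrier_sum weyl_carrier_mult_left higher_pderiv_mult_in_weyl_carrier) simp
  finally show ?thesis .
qed

lemma weyl_carrier_comp: "D \<in> weyl_carrier \<Longrightarrow> E \<in> weyl_carrier \<Longrightarrow> D \<circ> E \<in> weyl_carrier"
proof -
  assume D: "D \<in> weyl_carrier" and "E \<in> weyl_carrier"
  then obtain n c where "E = diff_op n c" unfolding weyl_carrier_iff by blast
  then have "D \<circ> E = (\<lambda>p. \<Sum>j<n. ((\<lambda>p. D (c j * p)) \<circ> (pderiv ^^ j)) p)"
    unfolding diff_op_def by (simp add: comp_def weyl_op_sum[OF D])
  also have "\<dots> \<in> weyl_carrier"
    by (intro weyl_carrier_sum weyl_carrier_comp_higher_pderiv weyl_carrier_comp_mult D) simp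
  finally show ?thesis .
qed

lemma weyl_algebra_simps [simp]:
  "carrier weyl_algebra = weyl_carrier"
  "D \<otimes>\<^bsub>weyl_algebra\<^esub> E = D \<circ> E"
  "\<one>\<^bsub>weyl_algebra\<^esub> = id"
  "\<zero>\<^bsub>weyl_algebra\<^esub> = (\<lambda>p. 0)"
  "D \<oplus>\<^bsub>weyl_algebra\<^esub> E = (\<lambda>p. D p + E p)"
  by (simp_all add: weyl_algebra_def)

lemma ring_weyl_algebra: "ring weyl_algebra"
proof (rule ringI)
  show "abelian_group weyl_algebra"
  proof (rule abelian_groupI)
    fix D assume "D \<in> carrier weyl_algebra"
    then show "\<exists>E\<in>carrier weyl_algebra. E \<oplus>\<^bsub>weyl_algebra\<^esub> D = \<zero>\<^bsub>weyl_algebra\<^esub>"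
      by (intro bexI[of _ "\<lambda>p. - D p"]) (auto simp: weyl_carrier_uminus)
  qed (auto simp: weyl_carrier_add weyl_carrier_zero add.assoc add.commute)
  show "monoid weyl_algebra"
    by (rule monoidI) (auto simp: weyl_carrier_comp id_in_weyl_carrier comp_assoc)
qed (auto simp: weyl_op_add)

lemma weyl_algebra_a_inv: "D \<in> weyl_carrier \<Longrightarrow> \<ominus>\<^bsub>weyl_algebra\<^esub> D = (\<lambda>p. - D p)"
  by (rule abelian_group.minus_equality[OF ring.is_abelian_group[OF ring_weyl_algebra]])
    (auto simp: weyl_carrier_uminus)

lemma id_ne_zero_op: "(id :: 'a::field_char_0 poly \<Rightarrow> 'a poly) \<noteq> (\<lambda>p. 0)"
  by (metis id_apply one_neq_zero)

section \<open>Simplicity of the Weyl algebra\<close>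

lemma weyl_ideal_commutator_closed:
  assumes "ideal I weyl_algebra" "D \<in> I" "E \<in> weyl_carrier"
  shows "(\<lambda>p. E (D p) - D (E p)) \<in> I"
proof -
  have "D \<in> weyl_carrier"
    using assms additive_subgroup.a_subset[OF ideal.axioms(1)] by fastforce
  then have "E \<otimes>\<^bsub>weyl_algebra\<^esub> D \<ominus>\<^bsub>weyl_algebra\<^esub> D \<otimes>\<^bsub>weyl_algebra\<^esub> E = (\<lambda>p. E (D p) - D (E p))"
    using assms(3) by (simp add: a_minus_def weyl_algebra_a_inv weyl_carrier_comp)
  moreover have "E \<otimes>\<^bsub>weyl_algebra\<^esub> D \<ominus>\<^bsub>weyl_algebra\<^esub> D \<otimes>\<^bsub>weyl_algebra\<^esub> E \<in> I"
    by (rule ring.ideal_commutator_closed[OF ring_weyl_algebra assms(1,2)]) (simp add: assms(3))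
  ultimately show ?thesis by simp
qed

definition ad_x :: "('a::field_char_0 poly \<Rightarrow> 'a poly) \<Rightarrow> 'a poly \<Rightarrow> 'a poly" where
  "ad_x D = (\<lambda>p. pCons 0 (D p) - D (pCons 0 p))"

lemma ideal_ad_x_closed: "ideal I weyl_algebra \<Longrightarrow> D \<in> I \<Longrightarrow> ad_x D \<in> I"
  unfolding ad_x_def by (rule weyl_ideal_commutator_closed[OF _ _ pCons_zero_in_weyl_carrier])

lemma ad_x_diff_op_Suc:
  "ad_x (diff_op (Suc n) c) = diff_op n (\<lambda>j. - of_nat (Suc j) * c (Suc j))"
proof
  fix p
  have "diff_op (Suc n) c (pCons 0 p) =
      pCons 0 (diff_op (Suc n) c p) + (\<Sum>j<Suc n. c j * (of_nat j * (pderiv ^^ (j - 1)) p))"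
    unfolding diff_op_def
    by (simp add: higher_pderiv_pCons_zero distrib_left sum.distrib sum_pCons_zero
        del: sum.lessThan_Suc)
  also have "(\<Sum>j<Suc n. c j * (of_nat j * (pderiv ^^ (j - 1)) p)) =
      (\<Sum>j<n. c (Suc j) * (of_nat (Suc j) * (pderiv ^^ j) p))"
    by (simp only: sum.lessThan_Suc_shift) simp
  finally have "ad_x (diff_op (Suc n) c) p = - (\<Sum>j<n. c (Suc j) * (of_nat (Suc j) * (pderiv ^^ j) p))"
    unfolding ad_x_def by simp
  also have "\<dots> = diff_op n (\<lambda>j. - of_nat (Suc j) * c (Suc j)) p"
    unfolding diff_op_def sum_negf[symmetric] by (rule sum.cong) (simp_all add: algebra_simps)
  finally show "ad_x (diff_op (Suc n) c) p = diff_op n (\<lambda>j. - of_nat (Suc j) * c (Suc j)) p" .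
qed

lemma ad_x_nilpotent: "D \<in> weyl_carrier \<Longrightarrow> \<exists>n. (ad_x ^^ n) D = (\<lambda>p. 0)"
proof -
  have "(ad_x ^^ n) (diff_op n c) = (\<lambda>p. 0)" for n and c :: "nat \<Rightarrow> 'a poly"
  proof (induction n arbitrary: c)
    case 0 then show ?case by (simp add: diff_op_def)
  next
    case (Suc n) then show ?case by (simp only: funpow_Suc_right comp_def ad_x_diff_op_Suc)
  qed
  then show "D \<in> weyl_carrier \<Longrightarrow> ?thesis" unfolding weyl_carrier_iff by blast
qed

lemma ad_x_eq_zero_imp_mult_op:
  assumes E: "E \<in> weyl_carrier" and commutes: "ad_x E = (\<lambda>p. 0)"
  shows "E = (*) (E 1)"
proof
  fix p
  have E_x: "E (pCons 0 q) = pCons 0 (E q)" for q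
    using fun_cong[OF commutes, of q] unfolding ad_x_def by simp
  show "E p = E 1 * p"
  proof (induction p)
    case 0 then show ?case using weyl_op_zero[OF E] by simp
  next
    case (pCons a q)
    have "pCons a q = Polynomial.smult a 1 + pCons 0 q" by simp
    then have "E (pCons a q) = Polynomial.smult a (E 1) + pCons 0 (E q)"
      by (metis weyl_op_add[OF E] weyl_op_smult[OF E] E_x)
    also have "\<dots> = E 1 * pCons a q"
      using pCons.IH by (simp add: algebra_simps)
    finally show ?case .
  qed
qed

text \<open>The last nonzero iterate of \<open>ad_x\<close> on \<open>D\<close> commutes with \<open>x\<close>, so it is a
  multiplication operator.\<close>

lemma weyl_ideal_contains_mult_op:
  assumes I: "ideal I weyl_algebra" and D: "D \<in> I" "D \<noteq> (\<lambda>p. 0)"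
  obtains c where "c \<noteq> 0" "(*) c \<in> I"
proof -
  have I_sub: "I \<subseteq> weyl_carrier"
    using additive_subgroup.a_subset[OF ideal.axioms(1)[OF I]] by simp
  have in_I: "(ad_x ^^ k) D \<in> I" for k
    by (induction k) (simp_all add: D ideal_ad_x_closed[OF I])
  obtain n where "(ad_x ^^ n) D = (\<lambda>p. 0)" using ad_x_nilpotent D(1) I_sub by blast
  define m where "m = (LEAST m. (ad_x ^^ m) D = (\<lambda>p. 0))"
  define E where "E = (ad_x ^^ (m - 1)) D"
  have m: "(ad_x ^^ m) D = (\<lambda>p. 0)"
    unfolding m_def by (rule LeastI) fact
  then have "m \<noteq> 0" using D(2) by (intro notI) simp
  then have "ad_x E = (\<lambda>p. 0)"
    using m unfolding E_def by (metis Suc_pred' comp_apply funpow.simps(2) gr0I)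
  moreover have "E \<noteq> (\<lambda>p. 0)"
    unfolding E_def m_def by (rule not_less_Least) (use \<open>m \<noteq> 0\<close> m_def in simp)
  moreover have "E \<in> I" unfolding E_def by (rule in_I)
  ultimately show ?thesis
    using that[of "E 1"] ad_x_eq_zero_imp_mult_op I_sub by (metis mult_zero_left subsetD)
qed

lemma weyl_ideal_higher_pderiv_closed:
  assumes I: "ideal I weyl_algebra" and c: "(*) c \<in> I"
  shows "(*) ((pderiv ^^ k) c) \<in> I"
proof (induction k)
  case (Suc k)
  have "(\<lambda>p. pderiv ((pderiv ^^ k) c * p) - (pderiv ^^ k) c * pderiv p) = (*) ((pderiv ^^ Suc k) c)"
    by (simp add: fun_eq_iff pderiv_mult algebra_simps)
  then show ?case
    using weyl_ideal_commutator_closed[OF I Suc pderiv_in_weyl_carrier] by simp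
qed (simp add: c)

lemma weyl_ideal_contains_id:
  assumes I: "ideal I weyl_algebra" and D: "D \<in> I" "D \<noteq> (\<lambda>p. 0)"
  shows "id \<in> I"
proof -
  from I D obtain c where "c \<noteq> 0" "(*) c \<in> I"
    by (rule weyl_ideal_contains_mult_op)
  define h where "h = fact (degree c) * lead_coeff c"
  have "h \<noteq> 0" using \<open>c \<noteq> 0\<close> by (simp add: h_def)
  have "(*) [:h:] \<in> I"
    using weyl_ideal_higher_pderiv_closed[OF I \<open>(*) c \<in> I\<close>, of "degree c"]
    by (simp add: higher_pderiv_degree h_def)
  then have "(*) [:inverse h:] \<circ> (*) [:h:] \<in> I"
    using ideal.I_l_closed[OF I, of "(*) [:h:]" "(*) [:inverse h:]"] by simp
  moreover have "(*) [:inverse h:] \<circ> (*) [:h:] = id"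
    using \<open>h \<noteq> 0\<close> by (simp add: fun_eq_iff)
  ultimately show ?thesis by simp
qed

lemma simple_ring_weyl_algebra: "simple_ring weyl_algebra"
  unfolding simple_ring_def
proof (intro conjI allI impI ring_weyl_algebra)
  show "\<one>\<^bsub>weyl_algebra\<^esub> \<noteq> \<zero>\<^bsub>weyl_algebra\<^esub>" using id_ne_zero_op by simp
  fix I assume I: "ideal I weyl_algebra"
  show "I = {\<zero>\<^bsub>weyl_algebra\<^esub>} \<or> I = carrier weyl_algebra"
  proof (rule disjCI)
    assume "I \<noteq> carrier weyl_algebra"
    then have "I \<subseteq> {\<zero>\<^bsub>weyl_algebra\<^esub>}"
      using weyl_ideal_contains_id[OF I] ideal.one_imp_carrier[OF I] by auto
    moreover have "\<zero>\<^bsub>weyl_algebra\<^esub> \<in> I"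
      using additive_subgroup.zero_closed[OF ideal.axioms(1)[OF I]] .
    ultimately show "I = {\<zero>\<^bsub>weyl_algebra\<^esub>}" by (metis empty_iff subset_singleton_iff)
  qed
qed

text \<open>\<open>G = 1 - x E\<close> vanishes on \<open>x k[x]\<close>, so \<open>ad_x\<close> just multiplies it by \<open>x\<close> and can
  never annihilate it.\<close>

lemma pCons_zero_no_left_inverse:
  assumes E: "E \<in> weyl_carrier"
  shows "E \<circ> pCons 0 \<noteq> id"
proof
  assume inverse: "E \<circ> pCons 0 = id"
  define G where "G = (\<lambda>p. p - pCons 0 (E p))"
  have "G = (\<lambda>p. id p + - (pCons 0 \<circ> E) p)" unfolding G_def by auto
  then have G: "G \<in> weyl_carrier"
    by (metis weyl_carrier_add weyl_carrier_uminus weyl_carrier_comp id_in_weyl_carrier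
        pCons_zero_in_weyl_carrier E)
  have G_x: "G (pCons 0 p) = 0" for p
    using fun_cong[OF inverse, of p] unfolding G_def by simp
  have ad_x_power: "(ad_x ^^ k) G = (\<lambda>p. [:0, 1:] ^ k * G p)" for k
    by (induction k) (auto simp: ad_x_def G_x)
  obtain n where "(ad_x ^^ n) G = (\<lambda>p. 0)" using ad_x_nilpotent[OF G] by blast
  then have "[:0, 1:] ^ n * G 1 = 0" using ad_x_power[of n] by metis
  then have "G 1 = 0" by simp
  moreover have "Polynomial.coeff (G 1) 0 = 1" unfolding G_def by simp
  ultimately show False by simp
qed

lemma id_notin_PIdl_pCons_zero: "id \<notin> PIdl\<^bsub>weyl_algebra\<^esub> (pCons (0 :: 'a::field_char_0))"
  unfolding cgenideal_def weyl_algebra_simps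
proof (rule notI, elim CollectE exE conjE)
  fix E :: "'a poly \<Rightarrow> 'a poly"
  assume "id = E \<circ> pCons 0" "E \<in> weyl_carrier"
  then show False using pCons_zero_no_left_inverse by metis
qed

section \<open>The subring \<open>k[x]\<close>\<close>

abbreviation weyl_kx_ring :: "('a::field_char_0 poly \<Rightarrow> 'a poly) ring" where
  "weyl_kx_ring \<equiv> subring_ring weyl_algebra weyl_kx"

lemma weyl_kx_ring_simps [simp]:
  "carrier weyl_kx_ring = weyl_kx"
  "D \<otimes>\<^bsub>weyl_kx_ring\<^esub> E = D \<circ> E"
  "\<zero>\<^bsub>weyl_kx_ring\<^esub> = (\<lambda>p. 0)"
  by (simp_all add: subring_ring_def weyl_algebra_def)

lemma weyl_kx_iff: "D \<in> weyl_kx \<longleftrightarrow> (\<exists>c. D = (*) c)"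
  unfolding weyl_kx_def by simp

lemma mult_op_in_weyl_kx [simp]: "(*) c \<in> weyl_kx"
  unfolding weyl_kx_iff by blast

lemma pCons_zero_in_weyl_kx: "pCons 0 \<in> weyl_kx"
proof -
  have "pCons 0 = (*) [:0, 1 :: 'a:]" by auto
  then show ?thesis by (metis mult_op_in_weyl_kx)
qed

lemma subdomain_weyl_kx: "subdomain weyl_kx (weyl_algebra :: ('a::field_char_0 poly \<Rightarrow> 'a poly) ring)"
proof -
  interpret ring "weyl_algebra :: ('a poly \<Rightarrow> 'a poly) ring" by (rule ring_weyl_algebra)
  have mult: "(*) c \<otimes>\<^bsub>weyl_algebra\<^esub> (*) d = (*) (c * d)" for c d :: "'a poly"
    by (auto simp: fun_eq_iff)
  have "subring weyl_kx (weyl_algebra :: ('a poly \<Rightarrow> 'a poly) ring)"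
  proof (rule subringI)
    show "weyl_kx \<subseteq> carrier weyl_algebra" by (auto simp: weyl_kx_iff)
    show "\<one>\<^bsub>weyl_algebra\<^esub> \<in> weyl_kx"
      unfolding weyl_algebra_simps weyl_kx_iff by (intro exI[of _ 1]) (simp add: fun_eq_iff)
  next
    fix h :: "'a poly \<Rightarrow> 'a poly" assume "h \<in> weyl_kx"
    then obtain c where "h = (*) c" unfolding weyl_kx_iff by blast
    then have "\<ominus>\<^bsub>weyl_algebra\<^esub> h = (\<lambda>p. - (c * p))" by (simp add: weyl_algebra_a_inv)
    also have "\<dots> = (*) (- c)" by auto
    finally show "\<ominus>\<^bsub>weyl_algebra\<^esub> h \<in> weyl_kx" by simp
  next
    fix h1 h2 :: "'a poly \<Rightarrow> 'a poly" assume "h1 \<in> weyl_kx" "h2 \<in> weyl_kx"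
    then obtain c d where "h1 = (*) c" "h2 = (*) d" unfolding weyl_kx_iff by blast
    moreover have "(*) c \<oplus>\<^bsub>weyl_algebra\<^esub> (*) d = (*) (c + d)" by (auto simp: fun_eq_iff algebra_simps)
    ultimately show "h1 \<otimes>\<^bsub>weyl_algebra\<^esub> h2 \<in> weyl_kx" "h1 \<oplus>\<^bsub>weyl_algebra\<^esub> h2 \<in> weyl_kx"
      using mult by (simp_all only: mult_op_in_weyl_kx)
  qed
  moreover have "h1 \<otimes>\<^bsub>weyl_algebra\<^esub> h2 = h2 \<otimes>\<^bsub>weyl_algebra\<^esub> h1"
    if "h1 \<in> weyl_kx" "h2 \<in> weyl_kx" for h1 h2 :: "'a poly \<Rightarrow> 'a poly"
    using that mult by (auto simp: weyl_kx_iff mult.commute)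
  moreover have "h1 = (\<lambda>p. 0) \<or> h2 = (\<lambda>p. 0)"
    if h: "h1 \<in> weyl_kx" "h2 \<in> weyl_kx" "h1 \<circ> h2 = (\<lambda>p. 0)" for h1 h2 :: "'a poly \<Rightarrow> 'a poly"
  proof -
    obtain c d where "h1 = (*) c" "h2 = (*) d" using h(1,2) unfolding weyl_kx_iff by blast
    moreover have "c * d = 0" using fun_cong[OF h(3), of 1] calculation by simp
    ultimately show ?thesis by auto
  qed
  ultimately show ?thesis
    using id_ne_zero_op by (intro subdomainI subcringI) simp_all
qed

lemma domain_weyl_kx_ring: "domain weyl_kx_ring"
  unfolding subring_ring_def
  using ring.subdomain_iff[OF ring_weyl_algebra] subdomain_weyl_kx subdomainE(1) by blast

lemma zero_ideal_in_Spec_weyl_kx: "{\<lambda>p. 0} \<in> Spec weyl_kx_ring"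
proof -
  interpret domain weyl_kx_ring by (rule domain_weyl_kx_ring)
  show ?thesis
    using primeideal_imp_prime_ideal_nc[OF zeroprimeideal] unfolding Spec_def by simp
qed

lemma mult_op_in_PIdl_pCons_zero_iff:
  "(*) c \<in> PIdl\<^bsub>weyl_kx_ring\<^esub> (pCons 0) \<longleftrightarrow> poly c 0 = 0"
proof
  assume "(*) c \<in> PIdl\<^bsub>weyl_kx_ring\<^esub> (pCons 0)"
  then obtain e where "(*) c = (*) e \<circ> pCons 0"
    unfolding cgenideal_def weyl_kx_ring_simps weyl_kx_iff by blast
  then have "c = e * pCons 0 1" by (metis comp_apply mult.right_neutral)
  then show "poly c 0 = 0" by simp
next
  assume "poly c 0 = 0"
  then obtain q where "c = pCons 0 q" by (cases c) auto
  then have "(*) c = (*) q \<circ> pCons 0" by auto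
  then show "(*) c \<in> PIdl\<^bsub>weyl_kx_ring\<^esub> (pCons 0)"
    unfolding cgenideal_def by auto
qed

lemma PIdl_pCons_zero_in_Spec_weyl_kx: "PIdl\<^bsub>weyl_kx_ring\<^esub> (pCons 0) \<in> Spec weyl_kx_ring"
proof -
  interpret domain weyl_kx_ring by (rule domain_weyl_kx_ring)
  have "primeideal (PIdl\<^bsub>weyl_kx_ring\<^esub> (pCons 0)) weyl_kx_ring"
  proof (rule primeidealI[OF cgenideal_ideal is_cring])
    show "pCons 0 \<in> carrier weyl_kx_ring" using pCons_zero_in_weyl_kx by simp
    have "(*) 1 \<notin> PIdl\<^bsub>weyl_kx_ring\<^esub> (pCons 0)" unfolding mult_op_in_PIdl_pCons_zero_iff by simp
    then show "carrier weyl_kx_ring \<noteq> PIdl\<^bsub>weyl_kx_ring\<^esub> (pCons 0)" by auto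
  next
    fix a b assume "a \<in> carrier weyl_kx_ring" "b \<in> carrier weyl_kx_ring"
      and ab: "a \<otimes>\<^bsub>weyl_kx_ring\<^esub> b \<in> PIdl\<^bsub>weyl_kx_ring\<^esub> (pCons 0)"
    then obtain c d where cd: "a = (*) c" "b = (*) d" unfolding weyl_kx_ring_simps weyl_kx_iff by blast
    then have "a \<otimes>\<^bsub>weyl_kx_ring\<^esub> b = (*) (c * d)" by (auto simp: fun_eq_iff)
    then have "poly (c * d) 0 = 0" using ab mult_op_in_PIdl_pCons_zero_iff by metis
    then have "poly c 0 = 0 \<or> poly d 0 = 0" by simp
    then show "a \<in> PIdl\<^bsub>weyl_kx_ring\<^esub> (pCons 0) \<or> b \<in> PIdl\<^bsub>weyl_kx_ring\<^esub> (pCons 0)"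
      unfolding cd mult_op_in_PIdl_pCons_zero_iff .
  qed
  then show ?thesis using primeideal_imp_prime_ideal_nc unfolding Spec_def by blast
qed

lemma PIdl_pCons_zero_weyl_kx_subset:
  "PIdl\<^bsub>weyl_kx_ring\<^esub> (pCons 0) \<subseteq> PIdl\<^bsub>weyl_algebra\<^esub> (pCons (0 :: 'a::field_char_0))"
  unfolding cgenideal_def by (auto simp: weyl_kx_iff)

lemma PIdl_pCons_zero_not_subset_zero:
  "\<not> PIdl\<^bsub>weyl_kx_ring\<^esub> (pCons 0) \<subseteq> {\<lambda>p. 0 :: 'a::field_char_0 poly}"
proof -
  interpret domain "weyl_kx_ring :: ('a poly \<Rightarrow> 'a poly) ring" by (rule domain_weyl_kx_ring)
  have "pCons 0 \<in> PIdl\<^bsub>weyl_kx_ring\<^esub> (pCons (0 :: 'a))"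
    using cgenideal_self pCons_zero_in_weyl_kx by simp
  moreover have "pCons 0 \<noteq> (\<lambda>p. 0 :: 'a poly)" by (metis pCons_eq_0_iff one_neq_zero)
  ultimately show ?thesis by blast
qed

theorem mainTheorem13:
  shows "rcorr_single_valued (weyl_algebra :: ('a::field_char_0 poly \<Rightarrow> 'a poly) ring) weyl_kx
       \<and> rcorr_continuous (weyl_algebra :: ('a::field_char_0 poly \<Rightarrow> 'a poly) ring) weyl_kx
       \<and> \<not> lambda_left_adjoint_rho (weyl_algebra :: ('a::field_char_0 poly \<Rightarrow> 'a poly) ring) weyl_kx"
proof (intro conjI)
  have Spec_weyl: "Spec (weyl_algebra :: ('a poly \<Rightarrow> 'a poly) ring) = {{\<lambda>p. 0}}"
    using Spec_simple_ring[OF simple_ring_weyl_algebra] by simp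
  have "(\<lambda>p. 0 :: 'a poly) \<in> weyl_kx"
    unfolding weyl_kx_iff by (intro exI[of _ 0]) auto
  then have "{\<lambda>p. 0} \<inter> weyl_kx = {\<lambda>p. 0 :: 'a poly}" by blast
  then show "rcorr_single_valued (weyl_algebra :: ('a poly \<Rightarrow> 'a poly) ring) weyl_kx"
    using zero_ideal_in_Spec_weyl_kx by (intro rcorr_single_valuedI) (simp add: Spec_weyl)
  show "rcorr_continuous (weyl_algebra :: ('a poly \<Rightarrow> 'a poly) ring) weyl_kx"
    by (rule rcorr_continuous_if_Spec_singleton[OF Spec_weyl])
  show "\<not> lambda_left_adjoint_rho (weyl_algebra :: ('a poly \<Rightarrow> 'a poly) ring) weyl_kx"
  proof (rule not_lambda_left_adjoint_rho[OF simple_ring_weyl_algebra])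
    show "left_ideal (PIdl\<^bsub>weyl_algebra\<^esub> (pCons 0)) (weyl_algebra :: ('a poly \<Rightarrow> 'a poly) ring)"
      by (rule ring.left_ideal_cgenideal[OF ring_weyl_algebra]) (simp add: pCons_zero_in_weyl_carrier)
  qed (use id_notin_PIdl_pCons_zero PIdl_pCons_zero_in_Spec_weyl_kx PIdl_pCons_zero_weyl_kx_subset
      zero_ideal_in_Spec_weyl_kx PIdl_pCons_zero_not_subset_zero in simp_all)
qed

end
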